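(* Let $f\in P_k^n$, let $N\in Sep(f)$, and let $x_1,\dots,x_m$ be essential variables of $f$. Suppose there exist constants $c_1,\dots,c_m\in Z_k$ such that $N\cap Ess(f(x_i=c_i))=\emptyset$ for every $i=1,\dots,m$. Then $M\cup N\in Sep(f)$ for every nonempty $M\subseteq\{x_1,\dots,x_m\}$.
   Context: $Z_k=\{0,1,\dots,k-1\}$, $k\ge2$; $P_k^n$ is the set of all maps $f:Z_k^n\to Z_k$ in the variables $x_1,\dots,x_n$. A variable $x_i$ is essential in $f$ if there are $a_1,\dots,a_n,b\in Z_k$ with $f(a_1,\dots,a_i,\dots,a_n)\ne f(a_1,\dots,a_{i-1},b,a_{i+1},\dots,a_n)$; $Ess(f)$ is the set of essential variables. For an essential $x_i$ and $c\in Z_k$, $f(x_i=c)$ is the function obtained by assigning $c$ to $x_i$; $f\succ g$ means $g=f(x_i=c)$ for some essential $x_i$ and $c$, and $\succeq$ is the reflexive-transitive closure of $\succ$ (the elements $g$ with $f\succeq g$ are the subfunctions of $f$). A nonempty set $M\subseteq Ess(f)$ is separable in $f$ if $M=Ess(g)$ for some $g$ with $f\succeq g$; $Sep(f)$ is the set of separable sets of $f$. *)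

theory Defs
  imports Main
begin

(* Inputs: assignments a :: nat => nat to the variables x_1..x_n (indices 1..n),
   with values in Z_k = {0..<k}; other indices are fixed to 0. *)
definition inputs :: "nat \<Rightarrow> nat \<Rightarrow> (nat \<Rightarrow> nat) set" where
  "inputs k n = {a. (\<forall>i\<in>{1..n}. a i < k) \<and> (\<forall>i. i \<notin> {1..n} \<longrightarrow> a i = 0)}"

definition Pkn :: "nat \<Rightarrow> nat \<Rightarrow> ((nat \<Rightarrow> nat) \<Rightarrow> nat) set" where
  "Pkn k n = {f. \<forall>a\<in>inputs k n. f a < k}"

definition Ess :: "nat \<Rightarrow> nat \<Rightarrow> ((nat \<Rightarrow> nat) \<Rightarrow> nat) \<Rightarrow> nat set" where
  "Ess k n f = {i\<in>{1..n}. \<exists>a\<in>inputs k n. \<exists>b<k. f a \<noteq> f (a(i := b))}"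

definition assign :: "((nat \<Rightarrow> nat) \<Rightarrow> nat) \<Rightarrow> nat \<Rightarrow> nat \<Rightarrow> ((nat \<Rightarrow> nat) \<Rightarrow> nat)" where
  "assign f i c = (\<lambda>a. f (a(i := c)))"

definition succ_fun :: "nat \<Rightarrow> nat \<Rightarrow> ((nat \<Rightarrow> nat) \<Rightarrow> nat) \<Rightarrow> ((nat \<Rightarrow> nat) \<Rightarrow> nat) \<Rightarrow> bool" where
  "succ_fun k n f g \<longleftrightarrow> (\<exists>i\<in>Ess k n f. \<exists>c<k. g = assign f i c)"

definition subfun :: "nat \<Rightarrow> nat \<Rightarrow> ((nat \<Rightarrow> nat) \<Rightarrow> nat) \<Rightarrow> ((nat \<Rightarrow> nat) \<Rightarrow> nat) \<Rightarrow> bool" where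
  "subfun k n = (succ_fun k n)\<^sup>*\<^sup>*"

definition Sep :: "nat \<Rightarrow> nat \<Rightarrow> ((nat \<Rightarrow> nat) \<Rightarrow> nat) \<Rightarrow> nat set set" where
  "Sep k n f = {M. M \<noteq> {} \<and> M \<subseteq> Ess k n f \<and> (\<exists>g. subfun k n f g \<and> M = Ess k n g)}"

end

theory Submission
  imports Defs
begin

text \<open>Every subfunction of \<open>f\<close> is \<open>f\<close> with some variables fixed to constants. Let \<open>N = Ess g\<close>
for a subfunction \<open>g\<close>. Extend the constants fixed in \<open>g\<close> by \<open>0\<close> to all variables outside \<open>N\<close>;
fixing by these constants every variable outside \<open>M \<union> N\<close> gives a subfunction \<open>h\<close> with
\<open>N \<subseteq> Ess h \<subseteq> M \<union> N\<close>, since \<open>g\<close> is recovered from \<open>h\<close> by fixing further variables that are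
inessential in \<open>g\<close>. If some \<open>x\<^sub>i \<in> M\<close> were inessential in \<open>h\<close>, then \<open>h\<close> would coincide with
\<open>h(x\<^sub>i = c\<^sub>i)\<close>, a subfunction of \<open>f(x\<^sub>i = c\<^sub>i)\<close>, forcing \<open>N \<subseteq> Ess (f(x\<^sub>i = c\<^sub>i))\<close>.\<close>

definition fix_vars :: "((nat \<Rightarrow> nat) \<Rightarrow> nat) \<Rightarrow> (nat \<Rightarrow> nat) \<Rightarrow> nat set \<Rightarrow> (nat \<Rightarrow> nat) \<Rightarrow> nat"
  where "fix_vars f \<beta> S = (\<lambda>a. f (override_on a \<beta> S))"

lemma fun_upd_in_inputs:
  "a \<in> inputs k n \<Longrightarrow> i \<in> {1..n} \<Longrightarrow> b < k \<Longrightarrow> a(i := b) \<in> inputs k n"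
  by (auto simp: inputs_def)

lemma override_on_in_inputs:
  "a \<in> inputs k n \<Longrightarrow> S \<subseteq> {1..n} \<Longrightarrow> \<forall>l\<in>S. \<beta> l < k \<Longrightarrow> override_on a \<beta> S \<in> inputs k n"
  by (auto simp: inputs_def override_on_def)

lemma Ess_subset_vars: "Ess k n f \<subseteq> {1..n}"
  by (auto simp: Ess_def)

lemma Ess_cong: "(\<And>a. a \<in> inputs k n \<Longrightarrow> g a = h a) \<Longrightarrow> Ess k n g = Ess k n h"
  unfolding Ess_def by (metis (no_types, lifting) fun_upd_in_inputs atLeastAtMost_iff mem_Collect_eq)

lemma fix_vars_fix_vars: "fix_vars (fix_vars f \<beta> S) \<beta> S' = fix_vars f \<beta> (S \<union> S')"
  by (auto simp: fix_vars_def override_on_def intro!: ext arg_cong[where f = f])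

lemma fix_vars_cong: "\<forall>l\<in>S. \<beta> l = \<beta>' l \<Longrightarrow> fix_vars f \<beta> S = fix_vars f \<beta>' S"
  by (auto simp: fix_vars_def override_on_def intro!: ext arg_cong[where f = f])

lemma assign_fix_vars:
  "i \<notin> S \<Longrightarrow> assign (fix_vars f \<beta> S) i c = fix_vars (assign f i c) \<beta> S"
  by (auto simp: fix_vars_def assign_def override_on_def intro!: ext arg_cong[where f = f])

lemma assign_fix_vars_insert:
  "i \<notin> S \<Longrightarrow> assign (fix_vars f \<beta> S) i c = fix_vars f (\<beta>(i := c)) (insert i S)"
  by (auto simp: fix_vars_def assign_def override_on_def intro!: ext arg_cong[where f = f])

lemma Ess_fix_vars_subset:
  assumes S: "S \<subseteq> {1..n}" "\<forall>l\<in>S. \<beta> l < k"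
  shows "Ess k n (fix_vars f \<beta> S) \<subseteq> Ess k n f - S"
proof
  fix j assume "j \<in> Ess k n (fix_vars f \<beta> S)"
  then obtain a b where a: "a \<in> inputs k n" "b < k" and j: "j \<in> {1..n}"
    and differ: "f (override_on a \<beta> S) \<noteq> f (override_on (a(j := b)) \<beta> S)"
    unfolding Ess_def fix_vars_def by blast
  have "j \<notin> S"
  proof
    assume "j \<in> S"
    then have "override_on a \<beta> S = override_on (a(j := b)) \<beta> S"
      by (auto simp: override_on_def)
    with differ show False by simp
  qed
  then have "override_on (a(j := b)) \<beta> S = (override_on a \<beta> S)(j := b)"
    by (auto simp: override_on_def)
  with differ a j override_on_in_inputs[OF a(1) S] \<open>j \<notin> S\<close>
  show "j \<in> Ess k n f - S" unfolding Ess_def by auto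
qed

lemma fix_vars_inessential_eq:
  assumes "S \<subseteq> {1..n}" "S \<inter> Ess k n f = {}" "\<forall>l\<in>S. \<beta> l < k" "a \<in> inputs k n"
  shows "fix_vars f \<beta> S a = f a"
proof -
  have "finite S" using assms(1) finite_subset by blast
  from this assms show ?thesis
  proof (induction S rule: finite_induct)
    case empty
    then show ?case by (simp add: fix_vars_def)
  next
    case (insert u S)
    have "override_on a \<beta> S \<in> inputs k n"
      using insert.prems by (intro override_on_in_inputs) auto
    moreover have "u \<notin> Ess k n f" "u \<in> {1..n}" "\<beta> u < k"
      using insert.prems by auto
    ultimately have "f ((override_on a \<beta> S)(u := \<beta> u)) = f (override_on a \<beta> S)"
      unfolding Ess_def by auto
    with insert show ?case by (simp add: fix_vars_def override_on_insert)
  qed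
qed

lemma subfun_imp_fix_vars:
  "subfun k n f g \<Longrightarrow> \<exists>S \<beta>. S \<subseteq> {1..n} \<and> (\<forall>l\<in>S. \<beta> l < k) \<and> g = fix_vars f \<beta> S"
  unfolding subfun_def
proof (induction rule: rtranclp_induct)
  case base
  show ?case by (rule exI[of _ "{}"]) (auto simp: fix_vars_def)
next
  case (step g g')
  from step.IH obtain S \<beta> where S: "S \<subseteq> {1..n}" "\<forall>l\<in>S. \<beta> l < k"
    and g: "g = fix_vars f \<beta> S" by blast
  from step.hyps(2) obtain i c where i: "i \<in> Ess k n g" and c: "c < k" and g': "g' = assign g i c"
    unfolding succ_fun_def by blast
  have "i \<notin> S" "i \<in> {1..n}"
    using i Ess_fix_vars_subset[OF S] Ess_subset_vars unfolding g by blast+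
  then have "g' = fix_vars f (\<beta>(i := c)) (insert i S)"
    unfolding g' g by (simp add: assign_fix_vars_insert)
  moreover have "insert i S \<subseteq> {1..n}" "\<forall>l\<in>insert i S. (\<beta>(i := c)) l < k"
    using S \<open>i \<in> {1..n}\<close> c by auto
  ultimately show ?case by blast
qed

text \<open>Assigning an inessential variable does not change a function on inputs, so
subfunctions are closed under arbitrary assignments up to agreement on inputs.\<close>

lemma subfun_assign:
  assumes g: "subfun k n f g" and "i \<in> {1..n}" "c < k"
  shows "\<exists>g'. subfun k n f g' \<and> (\<forall>a\<in>inputs k n. g' a = assign g i c a)"
proof (cases "i \<in> Ess k n g")
  case True
  then have "succ_fun k n g (assign g i c)"
    unfolding succ_fun_def using \<open>c < k\<close> by blast
  with g have "subfun k n f (assign g i c)"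
    unfolding subfun_def by simp
  then show ?thesis by blast
next
  case False
  then have "\<forall>a\<in>inputs k n. g a = assign g i c a"
    using assms unfolding Ess_def assign_def by auto
  with g show ?thesis by blast
qed

lemma fix_vars_subfun:
  assumes "S \<subseteq> {1..n}" "\<forall>l\<in>S. \<beta> l < k"
  shows "\<exists>g. subfun k n f g \<and> (\<forall>a\<in>inputs k n. g a = fix_vars f \<beta> S a)"
proof -
  have "finite S" using assms(1) finite_subset by blast
  from this assms show ?thesis
  proof (induction S rule: finite_induct)
    case empty
    show ?case by (rule exI[of _ f]) (simp add: subfun_def fix_vars_def)
  next
    case (insert i S)
    then obtain g where g: "subfun k n f g" "\<forall>a\<in>inputs k n. g a = fix_vars f \<beta> S a"
      by auto
    from subfun_assign[OF g(1), of i "\<beta> i"] insert.prems obtain g'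
      where g': "subfun k n f g'" "\<forall>a\<in>inputs k n. g' a = assign g i (\<beta> i) a"
      by auto
    have "assign g i (\<beta> i) a = fix_vars f \<beta> (insert i S) a" if "a \<in> inputs k n" for a
      using that g(2) insert fun_upd_in_inputs[OF that]
      by (simp add: assign_def fix_vars_def override_on_insert')
    with g' show ?case by auto
  qed
qed

text \<open>The constants \<open>\<beta>\<close> are those fixed in \<open>g\<close>, extended by \<open>0\<close>: fixing all variables
outside \<open>Ess g\<close> by \<open>\<beta>\<close> reproduces \<open>g\<close> on inputs, and that function arises from
\<open>fix_vars f \<beta> R\<close> by fixing still more variables.\<close>

lemma subfun_Ess_subset_Ess_fix_vars:
  assumes "subfun k n f g" "0 < k"
  obtains \<beta> where "\<forall>l. \<beta> l < k"
    and "\<And>R. R \<subseteq> {1..n} - Ess k n g \<Longrightarrow> Ess k n g \<subseteq> Ess k n (fix_vars f \<beta> R)"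
proof -
  from subfun_imp_fix_vars[OF assms(1)] obtain S \<beta>0 where S: "S \<subseteq> {1..n}" "\<forall>l\<in>S. \<beta>0 l < k"
    and g: "g = fix_vars f \<beta>0 S" by blast
  define \<beta> where "\<beta> = (\<lambda>l. if l \<in> S then \<beta>0 l else 0)"
  have \<beta>: "\<forall>l. \<beta> l < k" using S(2) \<open>0 < k\<close> by (simp add: \<beta>_def)
  have g_\<beta>: "g = fix_vars f \<beta> S"
    unfolding g by (rule fix_vars_cong) (simp add: \<beta>_def)
  have S_Ess: "S \<inter> Ess k n g = {}"
    using Ess_fix_vars_subset[OF S] g by blast
  define U where "U = {1..n} - Ess k n g - S"
  have "Ess k n g \<subseteq> Ess k n (fix_vars f \<beta> R)" if R: "R \<subseteq> {1..n} - Ess k n g" for R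
  proof -
    have "Ess k n g = Ess k n (fix_vars g \<beta> U)"
      by (rule Ess_cong, rule fix_vars_inessential_eq[symmetric]) (use \<beta> in \<open>auto simp: U_def\<close>)
    also have "fix_vars g \<beta> U = fix_vars (fix_vars f \<beta> R) \<beta> (S \<union> U)"
    proof -
      have "S \<union> U = R \<union> (S \<union> U)" using R S_Ess by (auto simp: U_def)
      then show ?thesis unfolding g_\<beta> fix_vars_fix_vars by metis
    qed
    also have "Ess k n \<dots> \<subseteq> Ess k n (fix_vars f \<beta> R)"
      using Ess_fix_vars_subset[of "S \<union> U" n \<beta> k] S \<beta> by (auto simp: U_def)
    finally show ?thesis .
  qed
  with \<beta> that show ?thesis by blast
qed

lemma Ess_fix_vars_subset_Ess_assign:
  assumes R: "R \<subseteq> {1..n}" "\<forall>l\<in>R. \<beta> l < k"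
    and i: "i \<in> {1..n} - R" "i \<notin> Ess k n (fix_vars f \<beta> R)" and "c < k"
  shows "Ess k n (fix_vars f \<beta> R) \<subseteq> Ess k n (assign f i c)"
proof -
  have "Ess k n (fix_vars f \<beta> R) = Ess k n (assign (fix_vars f \<beta> R) i c)"
    using i \<open>c < k\<close> by (intro Ess_cong) (auto simp: Ess_def assign_def)
  also have "\<dots> = Ess k n (fix_vars (assign f i c) \<beta> R)"
    using i by (simp add: assign_fix_vars)
  also have "\<dots> \<subseteq> Ess k n (assign f i c)"
    using Ess_fix_vars_subset[OF R] by blast
  finally show ?thesis .
qed

theorem lemma4:
  fixes k n m :: nat and f :: "(nat \<Rightarrow> nat) \<Rightarrow> nat" and N :: "nat set"
    and x c :: "nat \<Rightarrow> nat"
  assumes "k \<ge> 2"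
    and "f \<in> Pkn k n"
    and "N \<in> Sep k n f"
    and "\<forall>i\<in>{1..m}. x i \<in> Ess k n f"
    and "\<forall>i\<in>{1..m}. c i < k"
    and "\<forall>i\<in>{1..m}. N \<inter> Ess k n (assign f (x i) (c i)) = {}"
  shows "\<forall>M. M \<noteq> {} \<and> M \<subseteq> x ` {1..m} \<longrightarrow> M \<union> N \<in> Sep k n f"
proof (intro allI impI)
  fix M assume M: "M \<noteq> {} \<and> M \<subseteq> x ` {1..m}"
  from assms(3) obtain g where N: "N \<noteq> {}" "N \<subseteq> Ess k n f" "N = Ess k n g" and g: "subfun k n f g"
    unfolding Sep_def by blast
  from subfun_Ess_subset_Ess_fix_vars[OF g] assms(1) obtain \<beta> where \<beta>: "\<forall>l. \<beta> l < k"
    and N_Ess: "\<And>R. R \<subseteq> {1..n} - N \<Longrightarrow> N \<subseteq> Ess k n (fix_vars f \<beta> R)"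
    unfolding N(3) by auto
  define R where "R = {1..n} - N - M"
  have R: "R \<subseteq> {1..n}" "\<forall>l\<in>R. \<beta> l < k" using \<beta> by (auto simp: R_def)
  have M_vars: "M \<subseteq> Ess k n f" using M assms(4) by blast
  have "N \<subseteq> Ess k n (fix_vars f \<beta> R)" by (rule N_Ess) (auto simp: R_def)
  moreover have "Ess k n (fix_vars f \<beta> R) \<subseteq> M \<union> N"
    using Ess_fix_vars_subset[OF R, of f] Ess_subset_vars[of k n f] by (auto simp: R_def)
  moreover have "M \<subseteq> Ess k n (fix_vars f \<beta> R)"
  proof
    fix y assume "y \<in> M"
    then obtain i where i: "i \<in> {1..m}" "y = x i" using M by blast
    have "y \<in> {1..n} - R" using \<open>y \<in> M\<close> M_vars Ess_subset_vars[of k n f] by (auto simp: R_def)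
    with Ess_fix_vars_subset_Ess_assign[OF R] i assms(5,6) \<open>N \<subseteq> Ess k n (fix_vars f \<beta> R)\<close> N(1)
    show "y \<in> Ess k n (fix_vars f \<beta> R)" by blast
  qed
  moreover obtain h where "subfun k n f h" "Ess k n h = Ess k n (fix_vars f \<beta> R)"
    using fix_vars_subfun[OF R] Ess_cong by metis
  ultimately show "M \<union> N \<in> Sep k n f"
    unfolding Sep_def using M_vars N(1,2) by blast
qed

end
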